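(* Let $\vec d=(\vec a,\vec b)$ be a bidegree sequence of length $n$ with $\sum_i a_i=\sum_i b_i=n\bar c$ and $m:=\min\vec d\in[1..n]$. Define $k_*=m+\sqrt{m^2+n(\bar c-2m)}$, and let $k=\lceil k_*\rceil$ if $m^2+n(\bar c-2m)\ge0$ (i.e. $k_*$ is real) and $k=1$ otherwise. If $$\max\vec d\le\min\Big(\Big\lfloor n\frac{\bar c-m}{k}+m\Big\rfloor,\ n\Big),$$ then $\vec d$ is graphic with loops.
   Context: A bidegree sequence of length $n$ is a pair $\vec d=(\vec a,\vec b)$ with $\vec a=(a_1,\dots,a_n)\in\mathbb{N}_0^n$ and $\vec b=(b_1,\dots,b_n)\in\mathbb{N}_0^n$. It is graphic with loops if there is an $n\times n$ matrix with entries in $\{0,1\}$ whose $i$th row sum is $a_i$ and whose $i$th column sum is $b_i$ for every $i\in[1..n]$; it is graphic if such a matrix exists with all diagonal entries equal to $0$. $\max\vec d$ and $\min\vec d$ denote the maximum and minimum over all $2n$ entries $a_1,\dots,a_n,b_1,\dots,b_n$. The number $\bar c$ (the average degree) is defined by $\sum_i a_i=\sum_i b_i=n\bar c$. For integers $a\le b$, $[a..b]:=\{x\in\mathbb{Z}:a\le x\le b\}$. *)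

theory Defs
  imports Complex_Main
begin

text \<open>A bidegree sequence of length n is represented by two functions a b :: nat => nat,
  of which only the values on indices 0..<n matter (index i+1 of the paper is i here).\<close>

definition graphic_with_loops :: "nat \<Rightarrow> (nat \<Rightarrow> nat) \<Rightarrow> (nat \<Rightarrow> nat) \<Rightarrow> bool" where
  "graphic_with_loops n a b \<longleftrightarrow>
     (\<exists>M :: nat \<Rightarrow> nat \<Rightarrow> bool.
        (\<forall>i<n. card {j. j < n \<and> M i j} = a i) \<and>
        (\<forall>j<n. card {i. i < n \<and> M i j} = b j))"

definition max_bideg :: "nat \<Rightarrow> (nat \<Rightarrow> nat) \<Rightarrow> (nat \<Rightarrow> nat) \<Rightarrow> nat" where
  "max_bideg n a b = Max (a ` {..<n} \<union> b ` {..<n})"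

definition min_bideg :: "nat \<Rightarrow> (nat \<Rightarrow> nat) \<Rightarrow> (nat \<Rightarrow> nat) \<Rightarrow> nat" where
  "min_bideg n a b = Min (a ` {..<n} \<union> b ` {..<n})"

end

theory Submission
  imports Defs
begin

text \<open>By the Gale--Ryser theorem (proved by the greedy induction that gives the first row
  to the columns of largest remaining degree) it suffices that every set R of t rows satisfies
  sum a R <= sum_j min (b j) t. This is immediate when t <= m or t >= M, where m and M are the
  minimal and maximal degree. For m < t < M the left side is at most min (t M) (X + t m), with
  X = n (cbar - m) the total excess over the minimal degree, while bounding each min (b j) t from
  below by the chord through b j = m and b j = M gives n m + u (t - m) on the right, where
  u = X / (M - m). The bound on M says u >= k >= m + sqrt (m^2 + n (cbar - 2 m)), which is the
  quadratic inequality 2 m u + u (M - m) - u^2 <= m n that makes the two bounds compatible.\<close>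

definition gale_ryser_cond :: "'a set \<Rightarrow> 'b set \<Rightarrow> ('a \<Rightarrow> nat) \<Rightarrow> ('b \<Rightarrow> nat) \<Rightarrow> bool" where
  "gale_ryser_cond I J a b \<longleftrightarrow> (\<forall>R\<subseteq>I. sum a R \<le> (\<Sum>j\<in>J. min (b j) (card R)))"

lemma exists_dominating_subset:
  fixes b :: "'a \<Rightarrow> nat"
  assumes "finite J" "k \<le> card J"
  shows "\<exists>S\<subseteq>J. card S = k \<and> (\<forall>j\<in>S. \<forall>j'\<in>J - S. b j' \<le> b j)"
  using assms(2)
proof (induction k)
  case 0
  then show ?case by auto
next
  case (Suc k)
  then obtain S where S: "S \<subseteq> J" "card S = k" "\<forall>j\<in>S. \<forall>j'\<in>J - S. b j' \<le> b j"
    by auto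
  have "J - S \<noteq> {}"
    using Suc.prems S(1,2) card_mono[OF assms(1)] by force
  then obtain j where j: "j \<in> J - S" "b j = Max (b ` (J - S))"
    using Max_in[of "b ` (J - S)"] assms(1) by (metis finite_Diff finite_imageI image_iff image_is_empty)
  then have "\<forall>j'\<in>J - S. b j' \<le> b j"
    using assms(1) by simp
  moreover have "card (insert j S) = Suc k"
    using j S(1,2) finite_subset[OF S(1) assms(1)] by simp
  ultimately show ?case
    using S j by (intro exI[of _ "insert j S"]) auto
qed

lemma dominating_subset_positive:
  fixes b :: "'a \<Rightarrow> nat"
  assumes "finite J" "S \<subseteq> J" "\<forall>j\<in>S. \<forall>j'\<in>J - S. b j' \<le> b j"
    and "card S \<le> (\<Sum>j\<in>J. min (b j) 1)"
  shows "\<forall>j\<in>S. 0 < b j"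
proof (rule ccontr)
  assume "\<not> (\<forall>j\<in>S. 0 < b j)"
  then obtain j0 where j0: "j0 \<in> S" "b j0 = 0"
    by blast
  have "min (b j) 1 \<le> of_bool (j \<in> S - {j0})" if "j \<in> J" for j
    using assms(3) j0 that by fastforce
  then have "(\<Sum>j\<in>J. min (b j) 1) \<le> (\<Sum>j\<in>J. of_bool (j \<in> S - {j0}))"
    by (intro sum_mono) simp
  also have "\<dots> = card (S - {j0})"
  proof -
    have "J \<inter> {j. j \<in> S - {j0}} = S - {j0}"
      using assms(2) by blast
    then show ?thesis
      using assms(1) by simp
  qed
  also have "\<dots> < card S"
    using j0(1) assms(1,2) finite_subset by (metis card_Diff1_less)
  finally show False
    using assms(4) by simp
qed

lemma gale_ryser_cond_remove_row:
  fixes a :: "'a \<Rightarrow> nat" and b :: "'b \<Rightarrow> nat"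
  assumes cond: "gale_ryser_cond (insert r I) J a b" and "r \<notin> I" "finite I" "finite J"
    and S: "S \<subseteq> J" "card S = a r" "\<forall>j\<in>S. \<forall>j'\<in>J - S. b j' \<le> b j" and pos: "\<forall>j\<in>S. 0 < b j"
  shows "gale_ryser_cond I J a (\<lambda>j. if j \<in> S then b j - 1 else b j)"
  unfolding gale_ryser_cond_def
proof (intro allI impI)
  fix R assume R: "R \<subseteq> I"
  let ?b' = "\<lambda>j. if j \<in> S then b j - 1 else b j"
  show "sum a R \<le> (\<Sum>j\<in>J. min (?b' j) (card R))"
  proof (cases "\<forall>j\<in>S. card R < b j")
    case True
    then have "(\<Sum>j\<in>J. min (?b' j) (card R)) = (\<Sum>j\<in>J. min (b j) (card R))"
      by (intro sum.cong) auto
    then show ?thesis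
      using cond R unfolding gale_ryser_cond_def by auto
  next
    case False
    then obtain j0 where j0: "j0 \<in> S" "b j0 \<le> card R"
      by force
    \<comment> \<open>Every column outside S is then at most card R, so adding row r raises the bound by card S.\<close>
    have "min (b j) (Suc (card R)) = min (?b' j) (card R) + of_bool (j \<in> S)" if "j \<in> J" for j
      using pos S(3) j0 that by (cases "j \<in> S") force+
    then have "(\<Sum>j\<in>J. min (b j) (Suc (card R))) = (\<Sum>j\<in>J. min (?b' j) (card R)) + card S"
      using S(1) \<open>finite J\<close> by (simp add: sum.distrib Int_absorb1)
    moreover have "sum a (insert r R) \<le> (\<Sum>j\<in>J. min (b j) (card (insert r R)))"
      using cond R unfolding gale_ryser_cond_def by (meson insert_mono)
    moreover have "r \<notin> R" "finite R"
      using R \<open>r \<notin> I\<close> \<open>finite I\<close> finite_subset by auto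
    ultimately show ?thesis
      using S(2) by simp
  qed
qed

theorem gale_ryser:
  fixes a :: "'a \<Rightarrow> nat" and b :: "'b \<Rightarrow> nat"
  assumes "finite I" "finite J" "sum a I = sum b J" "gale_ryser_cond I J a b"
  shows "\<exists>M. (\<forall>i\<in>I. card {j\<in>J. M i j} = a i) \<and> (\<forall>j\<in>J. card {i\<in>I. M i j} = b j)"
  using assms
proof (induction I arbitrary: b rule: finite_induct)
  case empty
  then show ?case
    by (intro exI[of _ "\<lambda>_ _. False"]) simp
next
  case (insert r I)
  \<comment> \<open>Row r is placed in the a r columns of largest remaining degree.\<close>
  have ar_le: "a r \<le> (\<Sum>j\<in>J. min (b j) 1)"
    using insert.prems(3)[unfolded gale_ryser_cond_def, rule_format, of "{r}"] by simp
  also have "\<dots> \<le> card J"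
    using sum_mono[of J "\<lambda>j. min (b j) 1" "\<lambda>_. 1"] by simp
  finally obtain S where S: "S \<subseteq> J" "card S = a r" "\<forall>j\<in>S. \<forall>j'\<in>J - S. b j' \<le> b j"
    using exists_dominating_subset[OF insert.prems(1), of "a r" b] by auto
  have pos: "\<forall>j\<in>S. 0 < b j"
    using dominating_subset_positive[OF insert.prems(1) S(1,3)] S(2) ar_le by simp
  define b' where "b' j = (if j \<in> S then b j - 1 else b j)" for j
  have "sum b J = sum b' J + card S"
  proof -
    have "b j = b' j + of_bool (j \<in> S)" if "j \<in> J" for j
      using pos by (auto simp: b'_def)
    then show ?thesis
      using S(1) insert.prems(1) by (simp add: sum.distrib Int_absorb1)
  qed
  then have "sum a I = sum b' J"
    using insert.prems(2) insert.hyps S(2) by simp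
  moreover have "gale_ryser_cond I J a b'"
    unfolding b'_def using gale_ryser_cond_remove_row[OF insert.prems(3) insert.hyps(2,1)
      insert.prems(1) S pos] .
  ultimately obtain M' where M': "\<forall>i\<in>I. card {j\<in>J. M' i j} = a i" "\<forall>j\<in>J. card {i\<in>I. M' i j} = b' j"
    using insert.IH[OF insert.prems(1)] by blast
  define M where "M i j = (if i = r then j \<in> S else M' i j)" for i j
  have "card {j\<in>J. M i j} = a i" if "i \<in> insert r I" for i
  proof (cases "i = r")
    case True
    then have "{j\<in>J. M i j} = S"
      using S(1) by (auto simp: M_def)
    then show ?thesis
      using S(2) True by simp
  next
    case False
    then show ?thesis
      using M'(1) that by (simp add: M_def)
  qed
  moreover have "card {i\<in>insert r I. M i j} = b j" if "j \<in> J" for j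
  proof (cases "j \<in> S")
    case True
    then have "{i\<in>insert r I. M i j} = insert r {i\<in>I. M' i j}"
      using insert.hyps(2) by (auto simp: M_def)
    then show ?thesis
      using insert.hyps M'(2) pos that True by (simp add: b'_def)
  next
    case False
    then have "{i\<in>insert r I. M i j} = {i\<in>I. M' i j}"
      using insert.hyps(2) by (auto simp: M_def)
    then show ?thesis
      using M'(2) that False by (simp add: b'_def)
  qed
  ultimately show ?case
    by blast
qed

lemma min_ge_chord:
  fixes m M x t :: real
  assumes "m \<le> x" "x \<le> M" "m \<le> t" "t \<le> M"
  shows "m * (M - m) + (x - m) * (t - m) \<le> (M - m) * min x t"
proof (cases "x \<le> t")
  case True
  have "0 \<le> (x - m) * (M - t)"
    using assms by simp
  then show ?thesis
    using True by (simp add: algebra_simps)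
next
  case False
  have "0 \<le> (t - m) * (M - x)"
    using assms by simp
  then show ?thesis
    using False by (simp add: algebra_simps)
qed

lemma sum_min_ge_chord:
  fixes b :: "'a \<Rightarrow> nat" and m M t :: nat
  assumes "finite N" "\<forall>j\<in>N. m \<le> b j \<and> b j \<le> M" "m \<le> t" "t \<le> M"
  shows "real (card N * m) * (real M - m) + (real (sum b N) - real (card N * m)) * (real t - m)
    \<le> (real M - m) * real (\<Sum>j\<in>N. min (b j) t)"
proof -
  have "(\<Sum>j\<in>N. m * (real M - m) + (real (b j) - m) * (real t - m))
      \<le> (\<Sum>j\<in>N. (real M - m) * real (min (b j) t))"
  proof (intro sum_mono)
    fix j assume "j \<in> N"
    then show "m * (real M - m) + (real (b j) - m) * (real t - m) \<le> (real M - m) * real (min (b j) t)"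
      using assms min_ge_chord[of m "real (b j)" M t] by (simp add: of_nat_min)
  qed
  moreover have "(\<Sum>j\<in>N. (real (b j) - m) * (real t - m)) = (real (sum b N) - real (card N * m)) * (real t - m)"
    by (simp add: sum_subtractf of_nat_sum flip: sum_distrib_right)
  ultimately show ?thesis
    by (simp add: sum.distrib sum_distrib_left)
qed

lemma quadratic_le_of_root_le:
  fixes m n u v :: real
  assumes "0 \<le> m\<^sup>2 + u * v - n * m \<Longrightarrow> m + sqrt (m\<^sup>2 + u * v - n * m) \<le> u"
  shows "2 * m * u + u * v - u\<^sup>2 \<le> m * n"
proof -
  have "m\<^sup>2 + u * v - n * m \<le> (u - m)\<^sup>2"
  proof (cases "0 \<le> m\<^sup>2 + u * v - n * m")
    case True
    then have "(sqrt (m\<^sup>2 + u * v - n * m))\<^sup>2 \<le> (u - m)\<^sup>2"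
      using assms by (intro power_mono) auto
    then show ?thesis
      using True by simp
  qed (use zero_le_power2[of "u - m"] in linarith)
  then show ?thesis
    by (simp add: power2_eq_square algebra_simps)
qed

lemma min_le_of_quadratic_le:
  fixes m M t u n :: real
  assumes "0 \<le> m" "m \<le> t" "t \<le> M" "M \<le> n"
    and quad: "2 * m * u + u * (M - m) - u\<^sup>2 \<le> m * n"
  shows "min (t * M) (u * (M - m) + t * m) \<le> n * m + u * (t - m)"
proof (cases "t \<le> u")
  case True
  have "t * (M - u) \<le> m * (n - u)"
  proof (cases "M \<le> u")
    case True
    have "t * (M - u) \<le> m * (M - u)"
      using True assms by (intro mult_right_mono_neg) auto
    also have "\<dots> \<le> m * (n - u)"
      using assms by (intro mult_left_mono) auto
    finally show ?thesis .
  next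
    case False
    have "t * (M - u) \<le> u * (M - u)"
      using False \<open>t \<le> u\<close> by (intro mult_right_mono) auto
    also have "\<dots> \<le> m * (n - u)"
      using quad by (simp add: algebra_simps power2_eq_square)
    finally show ?thesis .
  qed
  then show ?thesis
    by (simp add: algebra_simps)
next
  case False
  have "u * (M - m) + t * m \<le> n * m + u * (t - m)"
  proof (cases "m \<le> u")
    case True
    have "u * (u - m) \<le> t * (u - m)"
      using True False by (intro mult_right_mono) auto
    then show ?thesis
      using quad by (simp add: algebra_simps power2_eq_square)
  next
    case False
    have "t * (m - u) \<le> M * (m - u)"
      using False assms by (intro mult_right_mono) auto
    moreover have "m * M \<le> m * n"
      using assms by (intro mult_left_mono) auto
    ultimately show ?thesis
      by (simp add: algebra_simps)
  qed
  then show ?thesis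
    by simp
qed

lemma gale_ryser_cond_of_quadratic_le:
  fixes a b :: "'a \<Rightarrow> nat" and m M :: nat and u :: real
  assumes fin: "finite N" and bounds: "\<forall>i\<in>N. m \<le> a i \<and> a i \<le> M \<and> m \<le> b i \<and> b i \<le> M"
    and "M \<le> card N" and sums: "sum a N = sum b N"
    and excess: "m < M \<Longrightarrow> real (sum b N) = real (card N * m) + u * (real M - m)"
    and quad: "m < M \<Longrightarrow> 2 * real m * u + u * (real M - m) - u\<^sup>2 \<le> real m * card N"
  shows "gale_ryser_cond N N a b"
  unfolding gale_ryser_cond_def
proof (intro allI impI)
  fix R assume R: "R \<subseteq> N"
  define t where "t = card R"
  have "finite R"
    using R fin finite_subset by blast
  have upper: "sum a R \<le> t * M"
    using sum_bounded_above[of R a M] bounds R by (auto simp: t_def)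
  consider "M \<le> t" | "t \<le> m" | "m < t" "t < M"
    by linarith
  then show "sum a R \<le> (\<Sum>j\<in>N. min (b j) (card R))"
  proof cases
    case 1
    have "(\<Sum>j\<in>N. min (b j) t) = sum b N"
      using bounds 1 by (intro sum.cong) auto
    moreover have "sum a R \<le> sum a N"
      using R fin by (intro sum_mono2) auto
    ultimately show ?thesis
      using sums by (simp add: t_def)
  next
    case 2
    have "(\<Sum>j\<in>N. min (b j) t) = card N * t"
      using bounds 2 by (simp add: min_absorb2 order_trans)
    moreover have "sum a R \<le> card N * t"
      using upper \<open>M \<le> card N\<close> by (metis le_trans mult.commute mult_le_mono2)
    ultimately show ?thesis
      by (simp add: t_def)
  next
    case 3
    have excess_eq: "real (sum b N) - real (card N * m) = u * (real M - m)"
      using excess 3 by simp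
    have "sum a N = sum a R + sum a (N - R)"
      using R fin by (simp add: sum.subset_diff)
    moreover have "(card N - t) * m \<le> sum a (N - R)"
      using sum_bounded_below[of "N - R" m a] bounds R \<open>finite R\<close>
      by (simp add: card_Diff_subset t_def)
    ultimately have "sum a R + (card N - t) * m \<le> sum b N"
      using sums by simp
    then have "real (sum a R) + real ((card N - t) * m) \<le> real (sum b N)"
      by (metis of_nat_add of_nat_le_iff)
    moreover have "real ((card N - t) * m) = real (card N * m) - real t * m"
      using R fin by (simp add: card_mono t_def of_nat_diff left_diff_distrib)
    ultimately have "real (sum a R) \<le> u * (real M - m) + real t * m"
      using excess 3 by linarith
    then have "real (sum a R) \<le> min (real t * M) (u * (real M - m) + real t * m)"
      using upper of_nat_le_iff[of "sum a R" "t * M", where 'a = real] by simp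
    also have "\<dots> \<le> real (card N) * m + u * (real t - m)"
      using 3 quad \<open>M \<le> card N\<close> by (intro min_le_of_quadratic_le) auto
    finally have "(real M - m) * real (sum a R) \<le> (real M - m) * (real (card N) * m + u * (real t - m))"
      using 3 by (intro mult_left_mono) auto
    also have "\<dots> = real (card N * m) * (real M - m) + (real (sum b N) - real (card N * m)) * (real t - m)"
      unfolding excess_eq by (simp add: algebra_simps)
    also have "\<dots> \<le> (real M - m) * real (\<Sum>j\<in>N. min (b j) t)"
      using 3 bounds by (intro sum_min_ge_chord fin) auto
    finally have "real (sum a R) \<le> real (\<Sum>j\<in>N. min (b j) t)"
      using 3 by simp
    then show ?thesis
      unfolding t_def of_nat_le_iff .
  qed
qed

lemma quadratic_le_of_max_bound:
  fixes m M n c :: real and k :: int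
  defines "u \<equiv> n * (c - m) / (M - m)"
  assumes k_def: "k = (if 0 \<le> m\<^sup>2 + n * (c - 2 * m) then \<lceil>m + sqrt (m\<^sup>2 + n * (c - 2 * m))\<rceil> else 1)"
    and "1 \<le> m" "m < M" and max_bound: "M \<le> n * (c - m) / k + m"
  shows "2 * m * u + u * (M - m) - u\<^sup>2 \<le> m * n"
proof -
  have "1 \<le> k"
    using k_def \<open>1 \<le> m\<close> by (auto simp: le_ceiling_iff intro: add_pos_nonneg)
  then have "(M - m) * k \<le> n * (c - m)"
    using max_bound by (simp add: field_simps)
  then have "k \<le> u"
    using \<open>m < M\<close> by (simp add: u_def field_simps)
  have "u * (M - m) = n * (c - m)"
    using \<open>m < M\<close> by (simp add: u_def)
  then have disc: "m\<^sup>2 + u * (M - m) - n * m = m\<^sup>2 + n * (c - 2 * m)"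
    by (simp add: algebra_simps)
  show ?thesis
  proof (rule quadratic_le_of_root_le)
    assume "0 \<le> m\<^sup>2 + u * (M - m) - n * m"
    then have "k = \<lceil>m + sqrt (m\<^sup>2 + n * (c - 2 * m))\<rceil>"
      using k_def disc by simp
    then show "m + sqrt (m\<^sup>2 + u * (M - m) - n * m) \<le> u"
      unfolding disc using \<open>k \<le> u\<close> le_of_int_ceiling order_trans by blast
  qed
qed

theorem theorem5:
  fixes n :: nat and a b :: "nat \<Rightarrow> nat" and cbar :: real and m k :: int
  assumes sums: "real (\<Sum>i<n. a i) = real n * cbar" "real (\<Sum>i<n. b i) = real n * cbar"
    and m_def: "m = int (min_bideg n a b)"
    and m_range: "1 \<le> m" "m \<le> int n"
    and k_def: "k = (if real_of_int (m^2) + real n * (cbar - 2 * real_of_int m) \<ge> 0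
                     then \<lceil>real_of_int m + sqrt (real_of_int (m^2) + real n * (cbar - 2 * real_of_int m))\<rceil>
                     else 1)"
    and max_bound: "int (max_bideg n a b) \<le>
         min \<lfloor>real n * (cbar - real_of_int m) / real_of_int k + real_of_int m\<rfloor> (int n)"
  shows "graphic_with_loops n a b"
proof -
  define N where "N = {..<n}"
  define Mx where "Mx = max_bideg n a b"
  define u where "u = real n * (cbar - m) / (real Mx - m)"
  have bounds: "\<forall>i\<in>N. nat m \<le> a i \<and> a i \<le> Mx \<and> nat m \<le> b i \<and> b i \<le> Mx"
    unfolding N_def Mx_def m_def min_bideg_def max_bideg_def by (auto intro: Min_le Max_ge)
  have "gale_ryser_cond N N a b"
  proof (rule gale_ryser_cond_of_quadratic_le[where u = u, OF _ bounds])
    show "Mx \<le> card N"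
      using max_bound by (simp add: N_def Mx_def)
    show "sum a N = sum b N"
      using sums unfolding N_def by (metis of_nat_eq_iff)
    assume "nat m < Mx"
    then have "u * (real Mx - m) = real n * (cbar - m)"
      using m_range by (simp add: u_def)
    then show "real (sum b N) = real (card N * nat m) + u * (real Mx - real (nat m))"
      using sums(2) m_range by (simp add: N_def algebra_simps)
    have "real Mx \<le> real n * (cbar - m) / k + m"
      using max_bound by (simp only: Mx_def min.bounded_iff le_floor_iff of_int_of_nat_eq)
    then have "2 * real_of_int m * u + u * (real Mx - m) - u\<^sup>2 \<le> m * real n"
      using k_def[unfolded of_int_power] m_range \<open>nat m < Mx\<close> unfolding u_def
      by (intro quadratic_le_of_max_bound) auto
    then show "2 * real (nat m) * u + u * (real Mx - real (nat m)) - u\<^sup>2 \<le> real (nat m) * real (card N)"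
      using m_range by (simp add: N_def)
  qed (simp add: N_def)
  then obtain M where "\<forall>i\<in>N. card {j\<in>N. M i j} = a i" "\<forall>j\<in>N. card {i\<in>N. M i j} = b j"
    using gale_ryser[of N N a b] sums by (auto simp: N_def)
  then show ?thesis
    unfolding graphic_with_loops_def N_def by auto
qed

end
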